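(* Let $M$ be an $n$-dimensional manifold (or open subset of $\mathbb{R}^n$) with coordinates $x^1,\dots,x^n$, and let $\eta^{ij}=\eta_{ij}$ be a constant diagonal matrix with diagonal entries $\eta^{ii}=\eta_{ii}\in\{1,-1\}$. Let $\mathcal{K}$ be the Clifford algebra of differential forms (over the ring of scalar functions on $M$) generated by $dx^1,\dots,dx^n$ subject to $dx^i dx^j+dx^j dx^i=2\eta^{ij}$, and let $\mathcal{C}$ be the real Clifford algebra generated by vectors $\mathbf{a}_1,\dots,\mathbf{a}_n$ subject to $\mathbf{a}_i\mathbf{a}_j+\mathbf{a}_j\mathbf{a}_i=2\eta_{ij}$. On the tensor product $\mathcal{K}\otimes\mathcal{C}$ (with scalar-function coefficients), define the product $(\vee,\vee)$ by $(f\,u\,A)(\vee,\vee)(g\,v\,B)=fg\,(uv)(AB)$ for scalar functions $f,g$, $u,v\in\mathcal{K}$, $A,B\in\mathcal{C}$, extended bilinearly, where $uv$ and $AB$ are the respective Clifford products. For an increasing multi-index $I=(i_1<\dots<i_p)$ (including the empty one) write $dx^I=dx^{i_1}\cdots dx^{i_p}$ and $\mathbf{a}_I=\mathbf{a}_{i_1}\cdots\mathbf{a}_{i_p}$. Call an element mirror symmetric if it is of the form $\sum_I f_I\, dx^I\mathbf{a}_I$ with scalar functions $f_I$. Then the set of mirror symmetric elements is closed under $(\vee,\vee)$ and, with this product, forms a commutative algebra: for all mirror symmetric $U,V$, $U(\vee,\vee)V=V(\vee,\vee)U$ and this product is mirror symmetric.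
   Context: Elements such as $dx^1\mathbf{a}_1$ or $dx^1dx^2\mathbf{a}_1\mathbf{a}_2$ are mirror symmetric (the index set of the differential-form factor equals that of the tangent Clifford factor), while e.g. $dx^1\mathbf{a}_2$ is not. The product $(\vee,\vee)$ uses the Clifford product in both tensor factors simultaneously. *)

theory Defs
  imports Complex_Main
begin

text \<open>Basis of the Clifford algebra generated by e_1,...,e_n with e_i e_j + e_j e_i = 2 eta_ij,
  eta diagonal: increasing multi-indices I, i.e. subsets of {1..n}; e_I = e_{i_1} ... e_{i_p}.
  The product of basis blades is e_I e_J = blade_sign eta I J * e_(I sym-diff J):
  reorder (one sign change for every pair i in I, j in J with j < i), then contract e_i e_i = eta_i.\<close>

definition blade_sign :: "(nat \<Rightarrow> real) \<Rightarrow> nat set \<Rightarrow> nat set \<Rightarrow> real" where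
  "blade_sign eta I J =
     (-1) ^ card {(i, j). i \<in> I \<and> j \<in> J \<and> j < i} * (\<Prod>i\<in>I \<inter> J. eta i)"

definition symdiff :: "'a set \<Rightarrow> 'a set \<Rightarrow> 'a set" where
  "symdiff A B = (A - B) \<union> (B - A)"

text \<open>Elements of K (x) C with scalar-function coefficients: U (I, J) is the coefficient
  function (on the points of M, of type 'm) of dx^I a_J. Only I, J \<subseteq> {1..n} are allowed.\<close>

type_synonym 'm KC = "nat set \<times> nat set \<Rightarrow> 'm \<Rightarrow> real"

definition KC_carrier :: "nat \<Rightarrow> 'm KC set" where
  "KC_carrier n = {U. \<forall>I J. \<not> (I \<subseteq> {1..n} \<and> J \<subseteq> {1..n}) \<longrightarrow> U (I, J) = (\<lambda>_. 0)}"

definition vv :: "nat \<Rightarrow> (nat \<Rightarrow> real) \<Rightarrow> 'm KC \<Rightarrow> 'm KC \<Rightarrow> 'm KC" where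
  "vv n eta U V = (\<lambda>(K, L) x.
     \<Sum>I\<in>Pow {1..n}. \<Sum>J\<in>Pow {1..n}. \<Sum>I'\<in>Pow {1..n}. \<Sum>J'\<in>Pow {1..n}.
       (if symdiff I I' = K \<and> symdiff J J' = L
        then blade_sign eta I I' * blade_sign eta J J' * U (I, J) x * V (I', J') x
        else 0))"

definition mirror_symmetric :: "nat \<Rightarrow> 'm KC \<Rightarrow> bool" where
  "mirror_symmetric n U \<longleftrightarrow> U \<in> KC_carrier n \<and> (\<forall>I J. I \<noteq> J \<longrightarrow> U (I, J) = (\<lambda>_. 0))"

end

theory Submission
  imports Defs
begin

text \<open>The two tensor factors of dx^I a_I multiply with the same blade sign:
  dx^I a_I (vee,vee) dx^J a_J = s^2 dx^K a_K with K the symmetric difference of I and J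
  and s = blade_sign eta I J. Since eta_i = +-1, s^2 = 1, so the product of basis elements
  is dx^K a_K again, and it is symmetric in I and J because K is.\<close>

lemma blade_sign_square:
  assumes "\<forall>i\<in>I \<inter> J. eta i = 1 \<or> eta i = -1"
  shows "(blade_sign eta I J)\<^sup>2 = 1"
proof -
  have "(\<Prod>i\<in>I \<inter> J. eta i)\<^sup>2 = (\<Prod>i\<in>I \<inter> J. (eta i)\<^sup>2)"
    by (rule prod_power_distrib)
  also have "\<dots> = 1"
    using assms by (intro prod.neutral) (force simp: power2_eq_square)
  finally show ?thesis
    unfolding blade_sign_def power_mult_distrib by (simp flip: power_mult)
qed

lemma symdiff_commute: "symdiff A B = symdiff B A"
  unfolding symdiff_def by blast

lemma symdiff_subset: "A \<subseteq> S \<Longrightarrow> B \<subseteq> S \<Longrightarrow> symdiff A B \<subseteq> S"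
  unfolding symdiff_def by blast

lemma sum_sum_delta:
  assumes "finite A" "finite B" "a \<in> A" "b \<in> B"
  shows "(\<Sum>x\<in>A. \<Sum>y\<in>B. if x = a \<and> y = b then f x y else 0) = f a b"
proof -
  have "(\<Sum>x\<in>A. \<Sum>y\<in>B. if x = a \<and> y = b then f x y else 0) =
        (\<Sum>x\<in>A. if x = a then \<Sum>y\<in>B. if y = b then f x y else 0 else 0)"
    by (intro sum.cong) auto
  then show ?thesis
    using assms by (simp add: sum.delta')
qed

lemma mirror_symmetric_coeff:
  assumes "mirror_symmetric n U"
  shows "U (I, J) x = (if J = I then U (I, I) x else 0)"
  using assms unfolding mirror_symmetric_def by metis

lemma vv_mirror_symmetric_blade_sign:
  assumes U: "mirror_symmetric n U" and V: "mirror_symmetric n V"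
  shows "vv n eta U V (K, L) x =
    (\<Sum>I\<in>Pow {1..n}. \<Sum>I'\<in>Pow {1..n}.
       if symdiff I I' = K \<and> symdiff I I' = L
       then (blade_sign eta I I')\<^sup>2 * U (I, I) x * V (I', I') x else 0)"
proof -
  have "vv n eta U V (K, L) x =
    (\<Sum>I\<in>Pow {1..n}. \<Sum>J\<in>Pow {1..n}. \<Sum>I'\<in>Pow {1..n}. \<Sum>J'\<in>Pow {1..n}.
       if J = I \<and> J' = I'
       then if symdiff I I' = K \<and> symdiff J J' = L
         then blade_sign eta I I' * blade_sign eta J J' * U (I, J) x * V (I', J') x else 0
       else 0)"
    unfolding vv_def prod.case
    by (intro sum.cong refl)
      (subst (1 2) mirror_symmetric_coeff[OF U], subst (1 2) mirror_symmetric_coeff[OF V], auto)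
  also have "\<dots> = (\<Sum>I\<in>Pow {1..n}. \<Sum>I'\<in>Pow {1..n}. \<Sum>J\<in>Pow {1..n}. \<Sum>J'\<in>Pow {1..n}.
       if J = I \<and> J' = I'
       then if symdiff I I' = K \<and> symdiff J J' = L
         then blade_sign eta I I' * blade_sign eta J J' * U (I, J) x * V (I', J') x else 0
       else 0)"
    by (intro sum.cong refl sum.swap)
  also have "\<dots> = (\<Sum>I\<in>Pow {1..n}. \<Sum>I'\<in>Pow {1..n}.
       if symdiff I I' = K \<and> symdiff I I' = L
       then (blade_sign eta I I')\<^sup>2 * U (I, I) x * V (I', I') x else 0)"
    by (intro sum.cong refl) (auto simp: sum_sum_delta power2_eq_square)
  finally show ?thesis .
qed

lemma vv_mirror_symmetric:
  assumes eta: "\<forall>i\<in>{1..n}. eta i = 1 \<or> eta i = -1"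
    and U: "mirror_symmetric n U" and V: "mirror_symmetric n V"
  shows "vv n eta U V (K, L) x =
    (if K = L then \<Sum>I\<in>Pow {1..n}. \<Sum>I'\<in>Pow {1..n}.
       if symdiff I I' = K then U (I, I) x * V (I', I') x else 0
     else 0)"
proof -
  have sq: "(blade_sign eta I I')\<^sup>2 = 1" if "I \<subseteq> {1..n}" for I I'
    using eta that by (intro blade_sign_square) blast
  show ?thesis
  proof (cases "K = L")
    case True
    show ?thesis
      unfolding vv_mirror_symmetric_blade_sign[OF U V] if_P[OF True]
      by (intro sum.cong refl) (simp add: True sq)
  next
    case False
    then show ?thesis
      unfolding vv_mirror_symmetric_blade_sign[OF U V] if_not_P[OF False]
      by (intro sum.neutral ballI) auto
  qed
qed

theorem mainTheorem1:
  fixes n :: nat and eta :: "nat \<Rightarrow> real" and U V :: "'m KC"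
  assumes "\<forall>i\<in>{1..n}. eta i = 1 \<or> eta i = -1"
    and "mirror_symmetric n U" and "mirror_symmetric n V"
  shows "vv n eta U V = vv n eta V U \<and> mirror_symmetric n (vv n eta U V)"
proof
  note UV = vv_mirror_symmetric[OF assms(1) assms(2) assms(3)]
  note VU = vv_mirror_symmetric[OF assms(1) assms(3) assms(2)]
  show "vv n eta U V = vv n eta V U"
  proof (intro ext, clarify)
    fix K L x
    show "vv n eta U V (K, L) x = vv n eta V U (K, L) x"
      unfolding UV VU by (subst sum.swap) (intro if_cong sum.cong refl; simp add: symdiff_commute mult.commute)
  qed
  show "mirror_symmetric n (vv n eta U V)"
    unfolding mirror_symmetric_def KC_carrier_def
  proof (intro conjI CollectI allI impI ext)
    fix K L :: "nat set" and x
    assume outside: "\<not> (K \<subseteq> {1..n} \<and> L \<subseteq> {1..n})"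
    show "vv n eta U V (K, L) x = 0"
    proof (cases "K = L")
      case True
      with outside have "\<not> K \<subseteq> {1..n}" by simp
      then have "symdiff I I' \<noteq> K" if "I \<subseteq> {1..n}" "I' \<subseteq> {1..n}" for I I'
        using symdiff_subset[OF that] by blast
      then show ?thesis unfolding UV if_P[OF True] by (intro sum.neutral) simp
    qed (simp add: UV)
  qed (simp add: UV)
qed

end
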